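(* In the discrete-weight (geometric) model, let $\gamma>0$ be a fixed constant and let $\bar{\boldsymbol\theta}^*=\bar{\boldsymbol\theta}^*_n$ satisfy $q_n\le\bar\alpha_i^*+\bar\beta_j^*\le Q_n$ for all $i\ne j$, with $0<q_n\le Q_n$. Put $m_n=e^{Q_n}/(e^{Q_n}-1)^2$ and $M_n=e^{q_n}/(e^{q_n}-1)^2$ and assume $M_n/m_n=o(n)$. Suppose the realized degrees satisfy \[ \max\Bigl\{\max_{1\le i\le n}|d_i-\mathbb{E}(d_i)|,\ \max_{1\le j\le n}|b_j-\mathbb{E}(b_j)|\Bigr\}\le\sqrt{\frac{8(n-1)\log n}{\gamma q_n^2}} . \] Then, with an implicit constant depending only on $\gamma$, for all sufficiently large $n$, \[ r:=\bigl\|[F'(\bar{\boldsymbol\theta}^* )]^{-1}F(\bar{\boldsymbol\theta}^* )\bigr\|_\infty= O\Bigl(q_n^{-1}\bigl(e^{3Q_n}(1+q_n^{-4})+e^{Q_n}\bigr)\sqrt{\frac{\log n}{n}}\Bigr). \]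
   Context: Discrete-weight model: Let $n\ge2$. Parameters $\bar{\boldsymbol\theta}=(\bar\alpha_1,\dots,\bar\alpha_n,\bar\beta_1,\dots,\bar\beta_{n-1})^\top$, with $\bar\beta_n:=0$ and $\bar\alpha_i+\bar\beta_j>0$ for $i\ne j$. Under $\mathbb{P}_{\bar{\boldsymbol\theta}}$, $A=(a_{i,j})$ has $a_{i,i}=0$ and mutually independent entries $a_{i,j}$ ($i\ne j$) with $\mathbb{P}(a_{i,j}=a)=(1-e^{-(\bar\alpha_i+\bar\beta_j)})e^{-(\bar\alpha_i+\bar\beta_j)a}$, $a=0,1,2,\dots$. $d_i=\sum_{j\ne i}a_{i,j}$, $b_j=\sum_{i\ne j}a_{i,j}$; expectations are under $\mathbb{P}_{\bar{\boldsymbol\theta}^*}$. With $f(x)=1/(e^x-1)$, $F:\{\bar{\boldsymbol\theta}\}\to\mathbb{R}^{2n-1}$ is $F_i(\bar{\boldsymbol\theta})=d_i-\sum_{k\ne i}f(\bar\alpha_i+\bar\beta_k)$ ($i\le n$), $F_{n+j}(\bar{\boldsymbol\theta})=b_j-\sum_{k\ne j}f(\bar\alpha_k+\bar\beta_j)$ ($j\le n-1$), and $F'$ is its Jacobian matrix. *)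

theory Defs
  imports "HOL-Analysis.Analysis" "HOL-Library.Landau_Symbols" "Jordan_Normal_Form.Gauss_Jordan_Elimination"
begin

text \<open>A parameter vector theta of length 2n-1 is a function
  nat => real: alpha_(i+1) = theta i for i < n, beta_(j+1) = theta (n+j) for j < n-1,
  and beta_n = 0. The adjacency matrix is a function A :: nat => nat => nat (entries a_ij,
  i,j < n; diagonal entries are irrelevant since they never enter d_i, b_j).\<close>

definition alpha :: "nat \<Rightarrow> (nat \<Rightarrow> real) \<Rightarrow> nat \<Rightarrow> real" where
  "alpha n \<theta> i = \<theta> i"

definition beta :: "nat \<Rightarrow> (nat \<Rightarrow> real) \<Rightarrow> nat \<Rightarrow> real" where
  "beta n \<theta> j = (if j < n - 1 then \<theta> (n + j) else 0)"

definition fgeo :: "real \<Rightarrow> real" where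
  "fgeo x = 1 / (exp x - 1)"

definition geom_mean :: "real \<Rightarrow> real" where
  "geom_mean x = (\<Sum>a. real a * ((1 - exp (- x)) * exp (- x * real a)))"

definition out_deg :: "nat \<Rightarrow> (nat \<Rightarrow> nat \<Rightarrow> nat) \<Rightarrow> nat \<Rightarrow> real" where
  "out_deg n A i = (\<Sum>j\<in>{..<n} - {i}. real (A i j))"

definition in_deg :: "nat \<Rightarrow> (nat \<Rightarrow> nat \<Rightarrow> nat) \<Rightarrow> nat \<Rightarrow> real" where
  "in_deg n A j = (\<Sum>i\<in>{..<n} - {j}. real (A i j))"

definition E_out :: "nat \<Rightarrow> (nat \<Rightarrow> real) \<Rightarrow> nat \<Rightarrow> real" where
  "E_out n \<theta> i = (\<Sum>j\<in>{..<n} - {i}. geom_mean (alpha n \<theta> i + beta n \<theta> j))"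

definition E_in :: "nat \<Rightarrow> (nat \<Rightarrow> real) \<Rightarrow> nat \<Rightarrow> real" where
  "E_in n \<theta> j = (\<Sum>i\<in>{..<n} - {j}. geom_mean (alpha n \<theta> i + beta n \<theta> j))"

definition Fmap :: "nat \<Rightarrow> (nat \<Rightarrow> nat \<Rightarrow> nat) \<Rightarrow> (nat \<Rightarrow> real) \<Rightarrow> nat \<Rightarrow> real" where
  "Fmap n A \<theta> k =
     (if k < n then out_deg n A k - (\<Sum>l\<in>{..<n} - {k}. fgeo (alpha n \<theta> k + beta n \<theta> l))
      else in_deg n A (k - n) - (\<Sum>l\<in>{..<n} - {k - n}. fgeo (alpha n \<theta> l + beta n \<theta> (k - n))))"

definition Fvec :: "nat \<Rightarrow> (nat \<Rightarrow> nat \<Rightarrow> nat) \<Rightarrow> (nat \<Rightarrow> real) \<Rightarrow> real vec" where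
  "Fvec n A \<theta> = vec (2 * n - 1) (Fmap n A \<theta>)"

definition Jac :: "nat \<Rightarrow> (nat \<Rightarrow> nat \<Rightarrow> nat) \<Rightarrow> (nat \<Rightarrow> real) \<Rightarrow> real mat" where
  "Jac n A \<theta> = mat (2 * n - 1) (2 * n - 1)
     (\<lambda>(k, l). deriv (\<lambda>t. Fmap n A (\<theta>(l := t)) k) (\<theta> l))"

definition sup_norm_vec :: "real vec \<Rightarrow> real" where
  "sup_norm_vec v = Max ((\<lambda>i. \<bar>v $ i\<bar>) ` {..<dim_vec v})"

definition r_newton :: "nat \<Rightarrow> (nat \<Rightarrow> nat \<Rightarrow> nat) \<Rightarrow> (nat \<Rightarrow> real) \<Rightarrow> real" where
  "r_newton n A \<theta> = sup_norm_vec (the (mat_inverse (Jac n A \<theta>)) *\<^sub>v Fvec n A \<theta>)"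

end

theory Submission
  imports Defs "Jordan_Normal_Form.Determinant"
begin

text \<open>With the normalisation \<open>\<beta>\<^sub>n = 0\<close>, the Jacobian \<open>F'(\<theta>)\<close> acts on \<open>z = (x, -w)\<close> like a
  weighted bipartite Laplacian: row \<open>i\<close> of \<open>F'(\<theta>) z\<close> is \<open>\<Sum>\<^sub>k v\<^sub>i\<^sub>k (x\<^sub>i - w\<^sub>k)\<close> and column \<open>j\<close> is
  \<open>\<Sum>\<^sub>k v\<^sub>k\<^sub>j (x\<^sub>k - w\<^sub>j)\<close>, with weights \<open>v\<^sub>i\<^sub>j = -f'(\<alpha>\<^sub>i + \<beta>\<^sub>j) \<in> [m, M]\<close>. A maximum principle
  bounds the spread of all \<open>x\<^sub>i, w\<^sub>j\<close> by \<open>O((M/m\<^sup>2 + 1/m) B / n)\<close> when every such sum is at most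
  \<open>B\<close> and \<open>M/m = o(n)\<close>. Since \<open>w\<^sub>n = 0\<close>, this bounds \<open>\<parallel>z\<parallel>\<^sub>\<infinity>\<close>; for \<open>B = 0\<close> it shows that
  \<open>F'(\<theta>)\<close> is nonsingular. The missing column equation (\<open>j = n\<close>) is the difference of the
  row and column sums of \<open>F\<close>, i.e. the deviation of \<open>b\<^sub>n\<close>. Finally \<open>B\<close> is the degree deviation
  bound, and \<open>M \<le> e\<^sup>q/q\<^sup>2\<close>, \<open>1/m \<le> e\<^sup>Q\<close> give the rate.\<close>

lemma sum_offdiag_ge:
  fixes u :: "nat \<Rightarrow> real"
  assumes "l < n" and "\<And>k. k < n \<Longrightarrow> k \<noteq> l \<Longrightarrow> m \<le> u k"
  shows "m * (real n - 1) \<le> (\<Sum>k\<in>{..<n}-{l}. u k)"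
proof -
  have "m * (real n - 1) = (\<Sum>k\<in>{..<n}-{l}. m)" using assms(1) by (simp add: of_nat_diff)
  also have "\<dots> \<le> (\<Sum>k\<in>{..<n}-{l}. u k)" using assms(2) by (intro sum_mono) auto
  finally show ?thesis .
qed

lemma bipartite_row_gap:
  fixes v :: "nat \<Rightarrow> nat \<Rightarrow> real" and x w :: "nat \<Rightarrow> real"
  assumes n2: "n \<ge> 2" and m: "m > 0" and l: "l < n"
    and vb: "\<And>k. k < n \<Longrightarrow> k \<noteq> l \<Longrightarrow> m \<le> v l k \<and> v l k \<le> M"
    and row: "\<bar>\<Sum>k\<in>{..<n}-{l}. v l k * (x l - w k)\<bar> \<le> B"
    and Tx: "x l \<le> T" and Tw: "\<And>k. k < n \<Longrightarrow> w k \<le> T"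
    and S: "(\<Sum>k<n. T - w k) \<le> S"
  shows "T - x l \<le> (M*S + B) / (m*(real n - 1))"
proof -
  have "m \<le> M" using vb[of "if l = 0 then 1 else 0"] n2 by (cases "l = 0") simp_all
  then have M: "M \<ge> 0" using m by simp
  have "(\<Sum>k\<in>{..<n}-{l}. v l k * (T - w k)) \<le> M * (\<Sum>k\<in>{..<n}-{l}. T - w k)"
    unfolding sum_distrib_left using vb Tw by (intro sum_mono mult_right_mono) auto
  also have "\<dots> \<le> M * (\<Sum>k<n. T - w k)" using M Tw by (intro mult_left_mono sum_mono2) auto
  also have "\<dots> \<le> M * S" using S M by (rule mult_left_mono)
  finally have gap: "(\<Sum>k\<in>{..<n}-{l}. v l k * (T - w k)) \<le> M * S" .
  have "(T - x l) * (m * (real n - 1)) \<le> (T - x l) * (\<Sum>k\<in>{..<n}-{l}. v l k)"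
    using Tx vb by (intro mult_left_mono sum_offdiag_ge[OF l]) auto
  also have "\<dots> = (\<Sum>k\<in>{..<n}-{l}. v l k * (T - w k)) - (\<Sum>k\<in>{..<n}-{l}. v l k * (x l - w k))"
    by (simp add: sum_distrib_left sum_subtractf[symmetric] algebra_simps)
  also have "\<dots> \<le> M*S + B" using gap row by linarith
  finally show ?thesis using n2 m by (simp add: pos_le_divide_eq)
qed

lemma bipartite_col_gap:
  fixes v :: "nat \<Rightarrow> nat \<Rightarrow> real" and x w :: "nat \<Rightarrow> real"
  assumes n2: "n \<ge> 2" and m: "m > 0" and j: "j < n"
    and vb: "\<And>k. k < n \<Longrightarrow> k \<noteq> j \<Longrightarrow> m \<le> v k j"
    and col: "\<bar>\<Sum>k\<in>{..<n}-{j}. v k j * (w j - x k)\<bar> \<le> B"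
    and gap: "\<And>k. k < n \<Longrightarrow> T - x k \<le> \<delta>"
  shows "T - w j \<le> \<delta> + B / (m*(real n - 1))"
proof (cases "T - w j \<le> \<delta>")
  case True
  have "B \<ge> 0" using col by linarith
  then have "B / (m*(real n - 1)) \<ge> 0" using n2 m by simp
  with True show ?thesis by linarith
next
  case False
  have "(T - w j - \<delta>) * (m * (real n - 1)) \<le> (T - w j - \<delta>) * (\<Sum>k\<in>{..<n}-{j}. v k j)"
    using False vb by (intro mult_left_mono sum_offdiag_ge[OF j]) auto
  also have "\<dots> = (\<Sum>k\<in>{..<n}-{j}. v k j * (T - \<delta> - x k)) - (\<Sum>k\<in>{..<n}-{j}. v k j * (w j - x k))"
    by (simp add: sum_distrib_left sum_subtractf[symmetric] algebra_simps)
  also have "\<dots> \<le> B"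
  proof -
    have "v k j * (T - \<delta> - x k) \<le> 0" if "k \<in> {..<n}-{j}" for k
    proof (rule mult_nonneg_nonpos)
      show "0 \<le> v k j" using vb[of k] that m by force
      show "T - \<delta> - x k \<le> 0" using gap[of k] that by auto
    qed
    then have "(\<Sum>k\<in>{..<n}-{j}. v k j * (T - \<delta> - x k)) \<le> 0" by (rule sum_nonpos)
    with col show ?thesis by linarith
  qed
  finally have "T - w j - \<delta> \<le> B / (m*(real n - 1))" using n2 m by (simp add: pos_le_divide_eq)
  then show ?thesis by linarith
qed

lemma bipartite_gap_from_top:
  fixes v :: "nat \<Rightarrow> nat \<Rightarrow> real" and x w :: "nat \<Rightarrow> real"
  assumes n2: "n \<ge> 2" and m: "m > 0"
    and vb: "\<And>i j. i < n \<Longrightarrow> j < n \<Longrightarrow> i \<noteq> j \<Longrightarrow> m \<le> v i j \<and> v i j \<le> M"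
    and row: "\<And>i. i < n \<Longrightarrow> \<bar>\<Sum>k\<in>{..<n}-{i}. v i k * (x i - w k)\<bar> \<le> B"
    and col: "\<And>j. j < n \<Longrightarrow> \<bar>\<Sum>k\<in>{..<n}-{j}. v k j * (w j - x k)\<bar> \<le> B"
    and Tx: "\<And>i. i < n \<Longrightarrow> x i \<le> T" and Tw: "\<And>j. j < n \<Longrightarrow> w j \<le> T"
    and a: "a < n" "x a = T" and D: "T - w a \<le> D"
    and j: "j < n"
  shows "T - x j \<le> (M*(B/m + D) + 2*B) / (m*(real n - 1))
     \<and> T - w j \<le> (M*(B/m + D) + 2*B) / (m*(real n - 1))"
proof -
  have "m * (\<Sum>k\<in>{..<n}-{a}. T - w k) \<le> (\<Sum>k\<in>{..<n}-{a}. v a k * (T - w k))"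
    unfolding sum_distrib_left using vb Tw a by (intro sum_mono mult_right_mono) auto
  also have "\<dots> \<le> B" using row[OF a(1)] a(2) by simp
  finally have "(\<Sum>k\<in>{..<n}-{a}. T - w k) \<le> B/m" using m by (simp add: field_simps)
  moreover have "(\<Sum>k<n. T - w k) = (T - w a) + (\<Sum>k\<in>{..<n}-{a}. T - w k)"
    using a by (simp add: sum.remove)
  ultimately have S: "(\<Sum>k<n. T - w k) \<le> B/m + D" using D by linarith
  define \<delta> where "\<delta> = (M*(B/m + D) + B) / (m*(real n - 1))"
  have row_gap: "T - x k \<le> \<delta>" if "k < n" for k
    unfolding \<delta>_def
    by (rule bipartite_row_gap[where v=v and x=x and w=w, OF n2 m that _ row[OF that] Tx[OF that] Tw S]) (use vb that in auto)
  then have "T - w j \<le> \<delta> + B / (m*(real n - 1))"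
    by (intro bipartite_col_gap[where v=v and x=x and w=w, OF n2 m j _ col[OF j]]) (use vb j in auto)
  moreover have "B \<ge> 0" using row[OF a(1)] by linarith
  then have "B / (m*(real n - 1)) \<ge> 0" using n2 m by simp
  moreover have "\<delta> + B / (m*(real n - 1)) = (M*(B/m + D) + 2*B) / (m*(real n - 1))"
    unfolding \<delta>_def by (simp add: add_divide_distrib)
  ultimately show ?thesis using row_gap[OF j] by linarith
qed

lemma bipartite_spread_bound:
  fixes v :: "nat \<Rightarrow> nat \<Rightarrow> real" and x w :: "nat \<Rightarrow> real"
  assumes n2: "n \<ge> 2" and m: "m > 0"
    and vb: "\<And>i j. i < n \<Longrightarrow> j < n \<Longrightarrow> i \<noteq> j \<Longrightarrow> m \<le> v i j \<and> v i j \<le> M"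
    and row: "\<And>i. i < n \<Longrightarrow> \<bar>\<Sum>k\<in>{..<n}-{i}. v i k * (x i - w k)\<bar> \<le> B"
    and col: "\<And>j. j < n \<Longrightarrow> \<bar>\<Sum>k\<in>{..<n}-{j}. v k j * (w j - x k)\<bar> \<le> B"
    and Mn: "2*M \<le> m*(real n - 1)"
  shows "\<forall>u\<in>x`{..<n} \<union> w`{..<n}. \<forall>u'\<in>x`{..<n} \<union> w`{..<n}.
           u - u' \<le> 2*(M*B/m + 2*B) / (m*(real n - 1))"
proof -
  define S where "S = x`{..<n} \<union> w`{..<n}"
  have fin: "finite S" and ne: "S \<noteq> {}" unfolding S_def using n2 by (auto simp: lessThan_empty_iff)
  define T where "T = Max S"
  define D where "D = T - Min S"
  have TS: "T \<in> S" and Tge: "\<And>u. u \<in> S \<Longrightarrow> u \<le> T" unfolding T_def using fin ne by auto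
  have Dge: "\<And>u. u \<in> S \<Longrightarrow> T - u \<le> D" and "Min S \<in> S"
    unfolding D_def using fin ne by auto
  have Tx: "\<And>i. i < n \<Longrightarrow> x i \<le> T" and Tw: "\<And>j. j < n \<Longrightarrow> w j \<le> T"
    using Tge unfolding S_def by auto
  have nm: "m * (real n - 1) > 0" using n2 m by simp
  have gap: "T - x i \<le> D" "T - w i \<le> D" if "i < n" for i
    using Dge that unfolding S_def by auto
  define E where "E = (M*(B/m + D) + 2*B) / (m*(real n - 1))"
  have "T - x j \<le> E \<and> T - w j \<le> E" if "j < n" for j
  proof -
    from TS obtain a where "a < n" "x a = T \<or> w a = T" unfolding S_def by auto
    then consider "a < n" "x a = T" | "a < n" "w a = T" by blast
    then show ?thesis
    proof cases
      case 1
      then show ?thesis unfolding E_def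
        using bipartite_gap_from_top[OF n2 m vb row col Tx Tw 1 gap(2)[OF 1(1)] that] by blast
    next
      case 2
      have vb': "\<And>i j. i < n \<Longrightarrow> j < n \<Longrightarrow> i \<noteq> j \<Longrightarrow> m \<le> v j i \<and> v j i \<le> M"
        using vb by auto
      show ?thesis unfolding E_def
        using bipartite_gap_from_top[OF n2 m vb' col row Tw Tx 2 gap(1)[OF 2(1)] that] by blast
    qed
  qed
  moreover obtain j where "j < n" "Min S = x j \<or> Min S = w j"
    using \<open>Min S \<in> S\<close> unfolding S_def by auto
  ultimately have "D \<le> E" unfolding D_def by auto
  then have DE: "D * (m*(real n - 1)) \<le> M*(B/m + D) + 2*B"
    using nm unfolding E_def by (simp add: pos_le_divide_eq)
  have "D \<ge> 0" unfolding D_def using TS fin by auto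
  then have "D * (m*(real n - 1)/2) \<le> D * (m*(real n - 1) - M)"
    using Mn by (intro mult_left_mono) auto
  also have "\<dots> \<le> M*B/m + 2*B" using DE by (simp add: algebra_simps)
  finally have "D * (m*(real n - 1)/2) \<le> M*B/m + 2*B" .
  then have "D \<le> 2*(M*B/m + 2*B) / (m*(real n - 1))" using nm by (simp add: field_simps)
  then show ?thesis using Dge Tge unfolding S_def[symmetric] by fastforce
qed

definition geom_var :: "real \<Rightarrow> real" where
  "geom_var x = exp x / (exp x - 1)^2"

lemma geom_var_pos: "x > 0 \<Longrightarrow> geom_var x > 0"
  unfolding geom_var_def by simp

lemma geom_var_antimono:
  assumes "0 < a" "a \<le> b"
  shows "geom_var b \<le> geom_var a"
proof -
  define X where "X = exp a"
  define Y where "Y = exp b"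
  have X1: "1 < X" unfolding X_def using assms by simp
  have XY: "X \<le> Y" unfolding X_def Y_def using assms by simp
  have "(Y-1)^2*X - (X-1)^2*Y = (Y-X)*(X*Y-1)" by (simp add: power2_eq_square algebra_simps)
  also have "\<dots> \<ge> 0" using X1 XY by (intro mult_nonneg_nonneg) (auto, smt (verit) mult_less_cancel_right2)
  finally have "Y * (X-1)^2 \<le> X * (Y-1)^2" by (simp add: algebra_simps)
  moreover have "(X-1)^2 > 0" "(Y-1)^2 > 0" using X1 XY by auto
  ultimately have "Y / (Y-1)^2 \<le> X / (X-1)^2" by (simp add: divide_simps)
  thus ?thesis unfolding geom_var_def X_def Y_def .
qed

lemma geom_mean_eq_fgeo:
  assumes "x > 0"
  shows "geom_mean x = fgeo x"
proof -
  define r where "r = exp (-x)"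
  have r0: "0 < r" "r < 1" unfolding r_def using assms by auto
  have e: "\<And>a. exp (- x * real a) = r ^ a" unfolding r_def
    by (metis exp_of_nat_mult mult.commute)
  define f where "f = (\<lambda>a::nat. real a * r ^ a)"
  have "(\<lambda>a. real (Suc a) * r ^ a) sums (1 / (1 - r)^2)"
    using geometric_deriv_sums[of r] r0 by simp
  hence "(\<lambda>a. r * (real (Suc a) * r ^ a)) sums (r * (1 / (1 - r)^2))" by (rule sums_mult)
  hence "(\<lambda>a. f (Suc a)) sums (r / (1 - r)^2)" unfolding f_def by (simp add: algebra_simps)
  hence "f sums (r / (1 - r)^2)" using sums_Suc_iff[of f] by (simp add: f_def)
  hence "(\<lambda>a. (1 - r) * f a) sums ((1 - r) * (r / (1 - r)^2))" by (rule sums_mult)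
  moreover have "(1 - r) * (r / (1 - r)^2) = r / (1 - r)" using r0 by (simp add: power2_eq_square)
  moreover have "(\<lambda>a. (1 - r) * f a) = (\<lambda>a. real a * ((1 - r) * r ^ a))"
    unfolding f_def by (simp add: algebra_simps)
  ultimately have s: "(\<lambda>a. real a * ((1 - r) * r ^ a)) sums (r / (1 - r))" by simp
  have "geom_mean x = r / (1 - r)"
    unfolding geom_mean_def e r_def[symmetric] using sums_unique[OF s] by simp
  also have "\<dots> = fgeo x" unfolding fgeo_def r_def using assms
    by (simp add: exp_minus field_simps)
  finally show ?thesis .
qed

lemma fgeo_has_real_derivative:
  assumes "x \<noteq> 0"
  shows "(fgeo has_real_derivative - geom_var x) (at x)"
proof -
  have ne: "exp x - 1 \<noteq> 0" using assms by simp
  have "((\<lambda>x. 1 / (exp x - 1)) has_real_derivative - (exp x / (exp x - 1)^2)) (at x)"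
    by (rule derivative_eq_intros refl | use ne in \<open>simp add: power2_eq_square\<close>)+
  thus ?thesis unfolding fgeo_def[abs_def] geom_var_def by simp
qed

lemma fgeo_shift_has_real_derivative:
  assumes "s \<noteq> 0"
  shows "((\<lambda>t. fgeo (s + (if P then t - t0 else 0))) has_real_derivative
           (if P then - geom_var s else 0)) (at t0)"
proof (cases P)
  case True
  have "((\<lambda>t. fgeo (s + (t - t0))) has_real_derivative (- geom_var s) * 1) (at t0)"
    by (rule DERIV_chain2[where f = fgeo])
       (use fgeo_has_real_derivative[OF assms] in \<open>auto intro!: derivative_eq_intros\<close>)
  then show ?thesis using True by simp
qed simp

lemma alpha_beta_fun_upd:
  assumes "i < n"
  shows "alpha n (p(l0 := t)) i + beta n (p(l0 := t)) j
       = (alpha n p i + beta n p j) + (if l0 = i \<or> (j < n-1 \<and> l0 = n+j) then t - p l0 else 0)"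
  using assms unfolding alpha_def beta_def by auto

lemma deriv_Fmap_row:
  assumes k: "k < n"
    and nz: "\<And>l. l < n \<Longrightarrow> l \<noteq> k \<Longrightarrow> alpha n p k + beta n p l \<noteq> 0"
  shows "deriv (\<lambda>t. Fmap n A (p(l0 := t)) k) (p l0)
     = (\<Sum>l\<in>{..<n}-{k}. if l0 = k \<or> (l < n-1 \<and> l0 = n+l) then geom_var (alpha n p k + beta n p l) else 0)"
proof -
  have feq: "(\<lambda>t. Fmap n A (p(l0 := t)) k) = (\<lambda>t. out_deg n A k -
     (\<Sum>l\<in>{..<n}-{k}. fgeo ((alpha n p k + beta n p l) + (if l0 = k \<or> (l < n-1 \<and> l0 = n+l) then t - p l0 else 0))))"
    using k by (simp add: Fmap_def alpha_beta_fun_upd)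
  have "((\<lambda>t. Fmap n A (p(l0 := t)) k) has_real_derivative 0 -
     (\<Sum>l\<in>{..<n}-{k}. if l0 = k \<or> (l < n-1 \<and> l0 = n+l) then - geom_var (alpha n p k + beta n p l) else 0)) (at (p l0))"
    unfolding feq
    by (intro DERIV_diff DERIV_const DERIV_sum fgeo_shift_has_real_derivative) (use nz in auto)
  from DERIV_imp_deriv[OF this] show ?thesis
    by (simp add: sum_negf[symmetric] if_distrib cong: if_cong)
qed

lemma deriv_Fmap_col:
  assumes k: "n \<le> k" "k < 2*n-1"
    and nz: "\<And>l. l < n \<Longrightarrow> l \<noteq> k-n \<Longrightarrow> alpha n p l + beta n p (k-n) \<noteq> 0"
  shows "deriv (\<lambda>t. Fmap n A (p(l0 := t)) k) (p l0)
     = (\<Sum>l\<in>{..<n}-{k-n}. if l0 = l \<or> l0 = k then geom_var (alpha n p l + beta n p (k-n)) else 0)"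
proof -
  have kk: "k - n < n - 1" "n + (k - n) = k" using k by auto
  have upd: "alpha n (p(l0 := t)) l + beta n (p(l0 := t)) (k-n)
       = (alpha n p l + beta n p (k-n)) + (if l0 = l \<or> l0 = k then t - p l0 else 0)"
    if "l \<in> {..<n}-{k-n}" for l t
    using alpha_beta_fun_upd[of l n p l0 t "k-n"] kk that by auto
  have feq: "(\<lambda>t. Fmap n A (p(l0 := t)) k) = (\<lambda>t. in_deg n A (k-n) -
     (\<Sum>l\<in>{..<n}-{k-n}. fgeo ((alpha n p l + beta n p (k-n)) + (if l0 = l \<or> l0 = k then t - p l0 else 0))))"
    using k upd unfolding Fmap_def by (auto intro!: sum.cong)
  have "((\<lambda>t. Fmap n A (p(l0 := t)) k) has_real_derivative 0 -
     (\<Sum>l\<in>{..<n}-{k-n}. if l0 = l \<or> l0 = k then - geom_var (alpha n p l + beta n p (k-n)) else 0)) (at (p l0))"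
    unfolding feq
    by (intro DERIV_diff DERIV_const DERIV_sum fgeo_shift_has_real_derivative) (use nz in auto)
  from DERIV_imp_deriv[OF this] show ?thesis
    by (simp add: sum_negf[symmetric] if_distrib cong: if_cong)
qed

lemma sum_if_eq_or_eq:
  fixes g :: "nat \<Rightarrow> real"
  assumes "a < N" "c \<Longrightarrow> b < N" "a \<noteq> b"
  shows "(\<Sum>l<N. if l = a \<or> (c \<and> l = b) then g l else 0) = g a + (if c then g b else 0)"
proof -
  have "(\<Sum>l<N. if l = a \<or> (c \<and> l = b) then g l else 0)
      = (\<Sum>l<N. if l = a then g l else 0) + (\<Sum>l<N. if c \<and> l = b then g l else 0)"
    unfolding sum.distrib[symmetric] using assms(3) by (intro sum.cong) auto
  also have "\<dots> = g a + (if c then g b else 0)" using assms by (cases c) (auto simp: sum.delta)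
  finally show ?thesis .
qed

lemma Jac_mult_vec_row:
  assumes k: "k < n" and n2: "n \<ge> 2" and dz: "dim_vec z = 2*n-1"
    and nz: "\<And>i j. i < n \<Longrightarrow> j < n \<Longrightarrow> i \<noteq> j \<Longrightarrow> alpha n p i + beta n p j \<noteq> 0"
  shows "(Jac n A p *\<^sub>v z) $ k = (\<Sum>l\<in>{..<n}-{k}. geom_var (alpha n p k + beta n p l) *
           (z $ k + (if l < n-1 then z $ (n+l) else 0)))"
proof -
  have "(Jac n A p *\<^sub>v z) $ k = (\<Sum>l0<2*n-1. Jac n A p $$ (k,l0) * z $ l0)"
    using k dz unfolding Jac_def by (simp add: scalar_prod_def atLeast0LessThan)
  also have "\<dots> = (\<Sum>l0<2*n-1. (\<Sum>l\<in>{..<n}-{k}. if l0 = k \<or> (l < n-1 \<and> l0 = n+l)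
                    then geom_var (alpha n p k + beta n p l) else 0) * z $ l0)"
    using k by (intro sum.cong refl) (simp add: Jac_def deriv_Fmap_row nz)
  also have "\<dots> = (\<Sum>l\<in>{..<n}-{k}. (\<Sum>l0<2*n-1. if l0 = k \<or> (l < n-1 \<and> l0 = n+l)
                    then geom_var (alpha n p k + beta n p l) * z $ l0 else 0))"
    by (simp only: sum_distrib_right, subst sum.swap, intro sum.cong refl) auto
  also have "\<dots> = (\<Sum>l\<in>{..<n}-{k}. geom_var (alpha n p k + beta n p l) *
                    (z $ k + (if l < n-1 then z $ (n+l) else 0)))"
    using k n2 by (intro sum.cong refl, subst sum_if_eq_or_eq) (auto simp: algebra_simps)
  finally show ?thesis .
qed

lemma Jac_mult_vec_col:
  assumes k: "n \<le> k" "k < 2*n-1" and n2: "n \<ge> 2" and dz: "dim_vec z = 2*n-1"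
    and nz: "\<And>i j. i < n \<Longrightarrow> j < n \<Longrightarrow> i \<noteq> j \<Longrightarrow> alpha n p i + beta n p j \<noteq> 0"
  shows "(Jac n A p *\<^sub>v z) $ k = (\<Sum>l\<in>{..<n}-{k-n}. geom_var (alpha n p l + beta n p (k-n)) *
           (z $ l + z $ k))"
proof -
  have "(Jac n A p *\<^sub>v z) $ k = (\<Sum>l0<2*n-1. Jac n A p $$ (k,l0) * z $ l0)"
    using k dz unfolding Jac_def by (simp add: scalar_prod_def atLeast0LessThan)
  also have "\<dots> = (\<Sum>l0<2*n-1. (\<Sum>l\<in>{..<n}-{k-n}. if l0 = l \<or> l0 = k
                    then geom_var (alpha n p l + beta n p (k-n)) else 0) * z $ l0)"
    using k by (intro sum.cong refl) (simp add: Jac_def deriv_Fmap_col nz)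
  also have "\<dots> = (\<Sum>l\<in>{..<n}-{k-n}. (\<Sum>l0<2*n-1. if l0 = l \<or> (True \<and> l0 = k)
                    then geom_var (alpha n p l + beta n p (k-n)) * z $ l0 else 0))"
    by (simp only: sum_distrib_right, subst sum.swap, intro sum.cong refl) auto
  also have "\<dots> = (\<Sum>l\<in>{..<n}-{k-n}. geom_var (alpha n p l + beta n p (k-n)) * (z $ l + z $ k))"
    using k n2 by (intro sum.cong refl, subst sum_if_eq_or_eq) (auto simp: algebra_simps)
  finally show ?thesis .
qed

lemma sum_offdiag_swap:
  fixes g :: "nat \<Rightarrow> nat \<Rightarrow> real"
  shows "(\<Sum>i<n. \<Sum>l\<in>{..<n}-{i}. g i l) = (\<Sum>l<n. \<Sum>i\<in>{..<n}-{l}. g i l)"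
proof -
  have offdiag: "(\<Sum>l\<in>{..<n}-{i}. h l) = (\<Sum>l<n. if l \<noteq> i then h l else 0)" for i and h :: "nat \<Rightarrow> real"
    using sum.inter_filter[of "{..<n}" h "\<lambda>l. l \<noteq> i"] by (simp add: set_diff_eq)
  have "(\<Sum>i<n. \<Sum>l\<in>{..<n}-{i}. g i l) = (\<Sum>i<n. \<Sum>l<n. if l \<noteq> i then g i l else 0)"
    by (simp add: offdiag)
  also have "\<dots> = (\<Sum>l<n. \<Sum>i<n. if i \<noteq> l then g i l else 0)"
    by (subst sum.swap) (simp add: eq_commute)
  also have "\<dots> = (\<Sum>l<n. \<Sum>i\<in>{..<n}-{l}. g i l)" by (simp add: offdiag)
  finally show ?thesis .
qed

lemma bipartite_last_col_residual:
  fixes v :: "nat \<Rightarrow> nat \<Rightarrow> real" and x w :: "nat \<Rightarrow> real"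
  assumes "n \<ge> 1"
  shows "(\<Sum>k\<in>{..<n}-{n-1}. v k (n-1) * (x k - w (n-1)))
       = (\<Sum>i<n. \<Sum>k\<in>{..<n}-{i}. v i k * (x i - w k)) - (\<Sum>j<n-1. \<Sum>k\<in>{..<n}-{j}. v k j * (x k - w j))"
proof -
  have "{..<n} = insert (n-1) {..<n-1}" using assms by auto
  then show ?thesis using sum_offdiag_swap[of "\<lambda>i l. v i l * (x i - w l)" n] by simp
qed

lemma Jac_solution_bound:
  assumes n2: "n \<ge> 2" and m: "m > 0"
    and vb: "\<And>i j. i < n \<Longrightarrow> j < n \<Longrightarrow> i \<noteq> j \<Longrightarrow> alpha n p i + beta n p j \<noteq> 0 \<and>
        m \<le> geom_var (alpha n p i + beta n p j) \<and> geom_var (alpha n p i + beta n p j) \<le> M"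
    and Mn: "2*M \<le> m*(real n - 1)"
    and dz: "dim_vec z = 2*n-1"
    and eq: "\<And>k. k < 2*n-1 \<Longrightarrow> (Jac n A p *\<^sub>v z) $ k = F k"
    and FB: "\<And>k. k < 2*n-1 \<Longrightarrow> \<bar>F k\<bar> \<le> B"
    and FL: "\<bar>(\<Sum>k<n. F k) - (\<Sum>j<n-1. F (n+j))\<bar> \<le> B"
  shows "\<forall>i<2*n-1. \<bar>z $ i\<bar> \<le> 2*(M*B/m + 2*B)/(m*(real n - 1))"
proof -
  define x where "x i = z $ i" for i
  define w where "w l = - (if l < n-1 then z $ (n+l) else 0)" for l
  define v where "v i j = geom_var (alpha n p i + beta n p j)" for i j
  have nz: "\<And>i j. i < n \<Longrightarrow> j < n \<Longrightarrow> i \<noteq> j \<Longrightarrow> alpha n p i + beta n p j \<noteq> 0"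
    using vb by blast
  have vb': "\<And>i j. i < n \<Longrightarrow> j < n \<Longrightarrow> i \<noteq> j \<Longrightarrow> m \<le> v i j \<and> v i j \<le> M"
    using vb unfolding v_def by blast
  define R where "R i = (\<Sum>k\<in>{..<n}-{i}. v i k * (x i - w k))" for i
  define C where "C j = (\<Sum>k\<in>{..<n}-{j}. v k j * (x k - w j))" for j
  have Rk: "R k = F k" if "k < n" for k
    using that Jac_mult_vec_row[OF that n2 dz nz, of A] eq[of k]
    unfolding R_def v_def x_def w_def by auto
  have Cj: "C j = F (n+j)" if "j < n-1" for j
    using that Jac_mult_vec_col[of n "n+j", OF _ _ n2 dz nz, of A] eq[of "n+j"]
    unfolding C_def v_def x_def w_def by (auto simp: add.commute)
  have "(\<Sum>i<n. R i) = (\<Sum>k<n. F k)" and "(\<Sum>j<n-1. C j) = (\<Sum>j<n-1. F (n+j))"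
    using Rk Cj by simp_all
  then have "C (n-1) = (\<Sum>k<n. F k) - (\<Sum>j<n-1. F (n+j))"
    using bipartite_last_col_residual[of n v x w] n2 unfolding R_def C_def by simp
  hence Clast: "\<bar>C (n-1)\<bar> \<le> B" using FL by simp
  have CB: "\<bar>C j\<bar> \<le> B" if "j < n" for j
  proof (cases "j < n-1")
    case True
    then show ?thesis using Cj FB[of "n+j"] by simp
  next
    case False
    with that have "j = n-1" by simp
    with Clast show ?thesis by simp
  qed
  have row: "\<And>i. i < n \<Longrightarrow> \<bar>\<Sum>k\<in>{..<n}-{i}. v i k * (x i - w k)\<bar> \<le> B"
    using Rk FB unfolding R_def by simp
  have col: "\<bar>\<Sum>k\<in>{..<n}-{j}. v k j * (w j - x k)\<bar> \<le> B" if "j < n" for j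
  proof -
    have "(\<Sum>k\<in>{..<n}-{j}. v k j * (w j - x k)) = - C j"
      unfolding C_def by (simp add: sum_negf[symmetric] algebra_simps)
    with CB[OF that] show ?thesis by simp
  qed
  note spread = bipartite_spread_bound[OF n2 m vb' row col Mn]
  have "w (n-1) \<in> x`{..<n} \<union> w`{..<n}" and "w (n-1) = 0"
    using n2 unfolding w_def by auto
  moreover have "x i \<in> x`{..<n} \<union> w`{..<n} \<and> z $ i = x i \<or>
                 w (i-n) \<in> x`{..<n} \<union> w`{..<n} \<and> z $ i = - w (i-n)" if "i < 2*n-1" for i
    using that unfolding x_def w_def by (cases "i < n") auto
  ultimately show ?thesis using spread by (smt (verit))
qed

lemma Jac_invertible:
  assumes n2: "n \<ge> 2" and m: "m > 0"
    and vb: "\<And>i j. i < n \<Longrightarrow> j < n \<Longrightarrow> i \<noteq> j \<Longrightarrow> alpha n p i + beta n p j \<noteq> 0 \<and>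
        m \<le> geom_var (alpha n p i + beta n p j) \<and> geom_var (alpha n p i + beta n p j) \<le> M"
    and Mn: "2*M \<le> m*(real n - 1)"
  shows "mat_inverse (Jac n A p) \<noteq> None"
proof
  assume none: "mat_inverse (Jac n A p) = None"
  have JC: "Jac n A p \<in> carrier_mat (2*n-1) (2*n-1)" unfolding Jac_def by simp
  have "Jac n A p \<notin> Units (ring_mat TYPE(real) (2*n-1) ())"
    using mat_inverse(1)[OF JC none] .
  hence "det (Jac n A p) = 0" using det_non_zero_imp_unit[OF JC, where b="()"] by blast
  then obtain u where u: "u \<in> carrier_vec (2*n-1)" "u \<noteq> 0\<^sub>v (2*n-1)" "Jac n A p *\<^sub>v u = 0\<^sub>v (2*n-1)"
    using det_0_iff_vec_prod_zero[OF JC] by blast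
  have "\<forall>i<2*n-1. \<bar>u $ i\<bar> \<le> 2*(M*0/m + 2*0)/(m*(real n - 1))"
    by (rule Jac_solution_bound[OF n2 m vb Mn, where A=A and F="\<lambda>_. 0"]) (use u in auto)
  hence "u = 0\<^sub>v (2*n-1)" using u(1) by (intro eq_vecI) auto
  with u(2) show False ..
qed

lemma r_newton_le_of_Jac_bounds:
  assumes n2: "n \<ge> 2" and m: "m > 0"
    and vb: "\<And>i j. i < n \<Longrightarrow> j < n \<Longrightarrow> i \<noteq> j \<Longrightarrow> alpha n p i + beta n p j \<noteq> 0 \<and>
        m \<le> geom_var (alpha n p i + beta n p j) \<and> geom_var (alpha n p i + beta n p j) \<le> M"
    and Mn: "2*M \<le> m*(real n - 1)"
    and FB: "\<And>k. k < 2*n-1 \<Longrightarrow> \<bar>Fmap n A p k\<bar> \<le> B"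
    and FL: "\<bar>(\<Sum>k<n. Fmap n A p k) - (\<Sum>j<n-1. Fmap n A p (n+j))\<bar> \<le> B"
  shows "r_newton n A p \<le> 2*(M*B/m + 2*B)/(m*(real n - 1))"
proof -
  obtain J' where J': "mat_inverse (Jac n A p) = Some J'"
    using Jac_invertible[OF n2 m vb Mn, of A] by auto
  have JC: "Jac n A p \<in> carrier_mat (2*n-1) (2*n-1)" unfolding Jac_def by simp
  from mat_inverse(2)[OF JC J'] have JJ': "Jac n A p * J' = 1\<^sub>m (2*n-1)"
    and J'C: "J' \<in> carrier_mat (2*n-1) (2*n-1)" by auto
  define z where "z = J' *\<^sub>v Fvec n A p"
  have FC: "Fvec n A p \<in> carrier_vec (2*n-1)" unfolding Fvec_def by simp
  have dz: "dim_vec z = 2*n-1" unfolding z_def using J'C by simp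
  have Jz: "Jac n A p *\<^sub>v z = Fvec n A p"
    unfolding z_def using assoc_mult_mat_vec[OF JC J'C FC, symmetric] JJ' FC by simp
  have "(Jac n A p *\<^sub>v z) $ k = Fmap n A p k" if "k < 2*n-1" for k
    unfolding Jz Fvec_def using that by simp
  then have bound: "\<forall>i<2*n-1. \<bar>z $ i\<bar> \<le> 2*(M*B/m + 2*B)/(m*(real n - 1))"
    using Jac_solution_bound[OF n2 m vb Mn dz _ FB FL] by blast
  have "r_newton n A p = Max ((\<lambda>i. \<bar>z $ i\<bar>) ` {..<2*n-1})"
    unfolding r_newton_def sup_norm_vec_def J' option.sel z_def[symmetric] dz ..
  also have "\<dots> \<le> 2*(M*B/m + 2*B)/(m*(real n - 1))"
    using bound n2 by (subst Max_le_iff) (auto simp: lessThan_empty_iff)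
  finally show ?thesis .
qed

lemma Fmap_row_eq_deviation:
  assumes k: "k < n" and pos: "\<And>l. l < n \<Longrightarrow> l \<noteq> k \<Longrightarrow> 0 < alpha n p k + beta n p l"
  shows "Fmap n A p k = out_deg n A k - E_out n p k"
  using k pos unfolding Fmap_def E_out_def by (auto intro!: sum.cong simp: geom_mean_eq_fgeo)

lemma Fmap_col_eq_deviation:
  assumes j: "j < n-1" and pos: "\<And>l. l < n \<Longrightarrow> l \<noteq> j \<Longrightarrow> 0 < alpha n p l + beta n p j"
  shows "Fmap n A p (n+j) = in_deg n A j - E_in n p j"
  using j pos unfolding Fmap_def E_in_def by (auto intro!: sum.cong simp: geom_mean_eq_fgeo)

lemma Fmap_rows_minus_cols:
  assumes n2: "n \<ge> 2"
    and pos: "\<And>l. l < n \<Longrightarrow> l \<noteq> n-1 \<Longrightarrow> 0 < alpha n p l + beta n p (n-1)"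
  shows "(\<Sum>k<n. Fmap n A p k) - (\<Sum>j<n-1. Fmap n A p (n+j)) = in_deg n A (n-1) - E_in n p (n-1)"
proof -
  define G where "G j = in_deg n A j - (\<Sum>l\<in>{..<n}-{j}. fgeo (alpha n p l + beta n p j))" for j
  have "(\<Sum>k<n. Fmap n A p k)
      = (\<Sum>k<n. out_deg n A k) - (\<Sum>k<n. \<Sum>l\<in>{..<n}-{k}. fgeo (alpha n p k + beta n p l))"
    unfolding Fmap_def by (simp add: sum_subtractf)
  also have "\<dots> = (\<Sum>j<n. G j)"
    unfolding G_def sum_subtractf out_deg_def in_deg_def
    by (simp only: sum_offdiag_swap[of "\<lambda>k l. real (A k l)"]
                   sum_offdiag_swap[of "\<lambda>k l. fgeo (alpha n p k + beta n p l)"])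
  also have "\<dots> = G (n-1) + (\<Sum>j<n-1. Fmap n A p (n+j))"
  proof -
    have "{..<n} = insert (n-1) {..<n-1}" using n2 by auto
    then show ?thesis by (simp add: Fmap_def G_def)
  qed
  finally show ?thesis
    using pos unfolding G_def E_in_def by (auto intro!: sum.cong simp: geom_mean_eq_fgeo)
qed

lemma r_newton_le_deviation:
  assumes n2: "n \<ge> 2" and q: "0 < q"
    and args: "\<And>i j. i < n \<Longrightarrow> j < n \<Longrightarrow> i \<noteq> j \<Longrightarrow>
                 q \<le> alpha n p i + beta n p j \<and> alpha n p i + beta n p j \<le> Q"
    and ratio: "4 * geom_var q \<le> geom_var Q * real n"
    and out: "\<And>i. i < n \<Longrightarrow> \<bar>out_deg n A i - E_out n p i\<bar> \<le> B"
    and inn: "\<And>j. j < n \<Longrightarrow> \<bar>in_deg n A j - E_in n p j\<bar> \<le> B"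
  shows "r_newton n A p \<le> 2*(geom_var q * B / geom_var Q + 2*B) / (geom_var Q * (real n - 1))"
proof (rule r_newton_le_of_Jac_bounds[OF n2])
  have pos: "0 < alpha n p i + beta n p j" if "i < n" "j < n" "i \<noteq> j" for i j
    using args[OF that] q by linarith
  have "q \<le> Q" using args[of 0 1] n2 by auto
  then show m: "0 < geom_var Q" using q by (intro geom_var_pos) auto
  show "alpha n p i + beta n p j \<noteq> 0 \<and> geom_var Q \<le> geom_var (alpha n p i + beta n p j) \<and>
        geom_var (alpha n p i + beta n p j) \<le> geom_var q" if "i < n" "j < n" "i \<noteq> j" for i j
    using args[OF that] pos[OF that] q by (auto intro!: geom_var_antimono)
  show "2 * geom_var q \<le> geom_var Q * (real n - 1)"
  proof -
    have "geom_var Q * real n \<le> 2 * (geom_var Q * (real n - 1))"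
      using m n2 by (simp add: algebra_simps)
    with ratio show ?thesis by linarith
  qed
  show "\<bar>Fmap n A p k\<bar> \<le> B" if "k < 2*n-1" for k
  proof (cases "k < n")
    case True
    then show ?thesis using out pos by (simp add: Fmap_row_eq_deviation)
  next
    case False
    define j where "j = k - n"
    have "k = n+j" "j < n-1" using False that unfolding j_def by auto
    then show ?thesis using inn pos Fmap_col_eq_deviation[of j n p A] by auto
  qed
  show "\<bar>(\<Sum>k<n. Fmap n A p k) - (\<Sum>j<n-1. Fmap n A p (n+j))\<bar> \<le> B"
  proof -
    have "(\<Sum>k<n. Fmap n A p k) - (\<Sum>j<n-1. Fmap n A p (n+j)) = in_deg n A (n-1) - E_in n p (n-1)"
      by (rule Fmap_rows_minus_cols[OF n2]) (use pos n2 in auto)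
    with inn[of "n-1"] n2 show ?thesis by simp
  qed
qed

lemma geom_var_le_exp_div_sq:
  assumes "x > 0"
  shows "geom_var x \<le> exp x / x^2"
proof -
  have "exp x - 1 \<ge> x" using exp_ge_add_one_self[of x] by linarith
  then show ?thesis unfolding geom_var_def using assms by (intro divide_left_mono power_mono) auto
qed

lemma inverse_geom_var_le_exp:
  assumes "x > 0"
  shows "1 / geom_var x \<le> exp x"
proof -
  have "1 / geom_var x = (exp x - 1)^2 / exp x" unfolding geom_var_def by simp
  also have "\<dots> \<le> (exp x)^2 / exp x" using assms by (intro divide_right_mono power_mono) auto
  also have "\<dots> = exp x" by (simp add: power2_eq_square)
  finally show ?thesis .
qed

lemma geom_var_div_sq_le:
  assumes q: "0 < q" "q \<le> Q"
  shows "geom_var q / (geom_var Q)^2 \<le> exp (3*Q) * (1 + 1/q^4)"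
proof -
  have "geom_var q / (geom_var Q)^2 = geom_var q * (1 / geom_var Q)^2" by (simp add: power_divide)
  also have "\<dots> \<le> (exp q / q^2) * (exp Q)^2"
    using q geom_var_pos[of q] geom_var_pos[of Q]
    by (intro mult_mono power_mono geom_var_le_exp_div_sq inverse_geom_var_le_exp) auto
  also have "\<dots> \<le> (exp Q / q^2) * (exp Q)^2" using q
    by (intro mult_right_mono divide_right_mono) auto
  also have "\<dots> = exp (3*Q) * (1/q^2)"
    by (simp add: power2_eq_square exp_add[symmetric])
  also have "\<dots> \<le> exp (3*Q) * (1 + 1/q^4)"
  proof -
    have "1/q^2 \<le> 1 + (1/q^2)^2"
      by (smt (verit) power2_eq_square mult_le_cancel_left1 zero_less_power q(1) divide_pos_pos)
    hence "1/q^2 \<le> 1 + 1/q^4" by (simp add: power_divide flip: power_mult)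
    thus ?thesis by (intro mult_left_mono) auto
  qed
  finally show ?thesis .
qed

lemma sqrt_deviation_div_le:
  fixes q x L \<gamma> :: real
  assumes q: "q > 0" and x: "x \<ge> 2" and L: "L \<ge> 0" and g: "\<gamma> > 0"
  shows "sqrt (8*(x-1)*L/(\<gamma>*q^2)) / (x-1) \<le> 4/sqrt \<gamma> * (1/q) * sqrt (L/x)"
proof (rule power2_le_imp_le)
  show "0 \<le> 4/sqrt \<gamma> * (1/q) * sqrt (L/x)" using g q x L by simp
  have x1: "x - 1 > 0" using x by simp
  have "(sqrt (8*(x-1)*L/(\<gamma>*q^2)) / (x-1))^2 = (8*(x-1)*L/(\<gamma>*q^2)) / (x-1)^2"
    using x1 L g by (simp add: power_divide)
  also have "\<dots> = (L/(\<gamma>*q^2)) * (8/(x-1))"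
  proof -
    have "(8*t*L/G)/t^2 = (L/G)*(8/t)" if "t \<noteq> 0" for t G :: real
      using that by (simp add: power2_eq_square)
    from this[of "x-1" "\<gamma>*q^2"] x1 show ?thesis by simp
  qed
  also have "\<dots> \<le> (L/(\<gamma>*q^2)) * (16/x)"
    using x x1 L g q by (intro mult_left_mono) (auto simp: divide_simps)
  also have "\<dots> = (4/sqrt \<gamma> * (1/q) * sqrt (L/x))^2"
    using g q x L by (simp add: power_mult_distrib power_divide mult_ac)
  finally show "(sqrt (8*(x-1)*L/(\<gamma>*q^2)) / (x-1))^2 \<le> (4/sqrt \<gamma> * (1/q) * sqrt (L/x))^2" .
qed

lemma rate_bound:
  fixes q Q x L \<gamma> :: real
  assumes q: "q > 0" "q \<le> Q" and x: "x \<ge> 2" and L: "L \<ge> 0" and g: "\<gamma> > 0"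
  defines "B \<equiv> sqrt (8*(x-1)*L/(\<gamma>*q^2))"
  shows "2*(geom_var q * B / geom_var Q + 2*B)/(geom_var Q*(x-1))
     \<le> (16/sqrt \<gamma>) * ((1/q) * (exp (3*Q) * (1 + 1/q^4) + exp Q) * sqrt (L/x))"
proof -
  define m where "m = geom_var Q"
  define M where "M = geom_var q"
  define K where "K = exp (3*Q) * (1 + 1/q^4) + exp Q"
  have m0: "m > 0" unfolding m_def using q by (intro geom_var_pos) auto
  have "M/m^2 \<le> exp (3*Q) * (1 + 1/q^4)" unfolding M_def m_def using q by (rule geom_var_div_sq_le)
  moreover have "1/m \<le> exp Q" unfolding m_def using q by (intro inverse_geom_var_le_exp) auto
  moreover have "exp (3*Q) * (1 + 1/q^4) \<ge> 0" using q by simp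
  moreover have "2/m = 2*(1/m)" by simp
  ultimately have MK: "M/m^2 + 2/m \<le> 2*K" unfolding K_def by (smt (verit))
  have "2*(M*B/m + 2*B)/(m*(x-1)) = 2 * (B/(x-1)) * (M/m^2 + 2/m)"
    using m0 x by (simp add: field_simps power2_eq_square)
  also have "\<dots> \<le> 2 * (4/sqrt \<gamma> * (1/q) * sqrt (L/x)) * (2*K)"
    using sqrt_deviation_div_le[OF q(1) x L g] MK m0 x L g q geom_var_pos[OF q(1)]
    unfolding B_def M_def by (intro mult_mono mult_left_mono) auto
  also have "\<dots> = (16/sqrt \<gamma>) * ((1/q) * K * sqrt (L/x))" by simp
  finally show ?thesis unfolding m_def M_def K_def .
qed

lemma r_newton_eventually_le:
  fixes q Q :: "nat \<Rightarrow> real" and \<theta>s :: "nat \<Rightarrow> nat \<Rightarrow> real" and A :: "nat \<Rightarrow> nat \<Rightarrow> nat \<Rightarrow> nat"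
  assumes g: "\<gamma> > 0"
    and qQ: "\<And>n. n \<ge> 2 \<Longrightarrow> 0 < q n \<and> q n \<le> Q n"
    and args: "\<And>n i j. n \<ge> 2 \<Longrightarrow> i < n \<Longrightarrow> j < n \<Longrightarrow> i \<noteq> j \<Longrightarrow>
         q n \<le> alpha n (\<theta>s n) i + beta n (\<theta>s n) j \<and> alpha n (\<theta>s n) i + beta n (\<theta>s n) j \<le> Q n"
    and ratio: "(\<lambda>n. geom_var (q n) / geom_var (Q n)) \<in> o(\<lambda>n. real n)"
    and out: "\<And>n i. n \<ge> 2 \<Longrightarrow> i < n \<Longrightarrow>
         \<bar>out_deg n (A n) i - E_out n (\<theta>s n) i\<bar> \<le> sqrt (8 * (real n - 1) * ln (real n) / (\<gamma> * (q n)^2))"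
    and inn: "\<And>n j. n \<ge> 2 \<Longrightarrow> j < n \<Longrightarrow>
         \<bar>in_deg n (A n) j - E_in n (\<theta>s n) j\<bar> \<le> sqrt (8 * (real n - 1) * ln (real n) / (\<gamma> * (q n)^2))"
  shows "\<exists>N. \<forall>n\<ge>N. r_newton n (A n) (\<theta>s n) \<le>
     16 / sqrt \<gamma> * ((1 / q n) * (exp (3 * Q n) * (1 + 1 / (q n)^4) + exp (Q n)) * sqrt (ln (real n) / real n))"
    (is "\<exists>N. \<forall>n\<ge>N. ?r n \<le> ?rate n")
proof -
  have "eventually (\<lambda>n. norm (geom_var (q n) / geom_var (Q n)) \<le> 1/4 * norm (real n)) at_top"
    using landau_o.smallD[OF ratio, of "1/4"] by simp
  then obtain N0 where N0: "\<And>n. n \<ge> N0 \<Longrightarrow> \<bar>geom_var (q n) / geom_var (Q n)\<bar> \<le> real n / 4"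
    unfolding eventually_at_top_linorder by auto
  show ?thesis
  proof (intro exI[of _ "max N0 2"] allI impI)
    fix n assume "max N0 2 \<le> n"
    then have n2: "n \<ge> 2" and "n \<ge> N0" by auto
    have m: "geom_var (Q n) > 0" using qQ[OF n2] by (intro geom_var_pos) auto
    moreover have "geom_var (q n) / geom_var (Q n) \<le> real n / 4"
      using N0[OF \<open>n \<ge> N0\<close>] by linarith
    ultimately have "4 * geom_var (q n) \<le> geom_var (Q n) * real n"
      by (simp add: field_simps)
    then have "?r n \<le> 2 * (geom_var (q n) * sqrt (8 * (real n - 1) * ln (real n) / (\<gamma> * (q n)^2))
        / geom_var (Q n) + 2 * sqrt (8 * (real n - 1) * ln (real n) / (\<gamma> * (q n)^2))) / (geom_var (Q n) * (real n - 1))"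
      using qQ[OF n2] n2 by (intro r_newton_le_deviation[OF n2] args out inn) auto
    also have "\<dots> \<le> ?rate n" using qQ[OF n2] n2 g by (intro rate_bound) auto
    finally show "?r n \<le> ?rate n" .
  qed
qed

theorem lemma6:
  fixes \<gamma> :: real
  assumes "\<gamma> > 0"
  shows "\<exists>C. \<forall>(\<theta>s :: nat \<Rightarrow> nat \<Rightarrow> real) (q :: nat \<Rightarrow> real) (Q :: nat \<Rightarrow> real)
              (A :: nat \<Rightarrow> nat \<Rightarrow> nat \<Rightarrow> nat).
     (\<forall>n\<ge>2. 0 < q n \<and> q n \<le> Q n) \<longrightarrow>
     (\<forall>n\<ge>2. \<forall>i<n. \<forall>j<n. i \<noteq> j \<longrightarrow>
         q n \<le> alpha n (\<theta>s n) i + beta n (\<theta>s n) j \<and>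
         alpha n (\<theta>s n) i + beta n (\<theta>s n) j \<le> Q n) \<longrightarrow>
     (\<lambda>n. (exp (q n) / (exp (q n) - 1)^2) / (exp (Q n) / (exp (Q n) - 1)^2))
        \<in> o(\<lambda>n. real n) \<longrightarrow>
     (\<forall>n\<ge>2. \<forall>i<n.
         \<bar>out_deg n (A n) i - E_out n (\<theta>s n) i\<bar> \<le> sqrt (8 * (real n - 1) * ln (real n) / (\<gamma> * (q n)^2)) \<and>
         \<bar>in_deg n (A n) i - E_in n (\<theta>s n) i\<bar> \<le> sqrt (8 * (real n - 1) * ln (real n) / (\<gamma> * (q n)^2))) \<longrightarrow>
     (\<exists>N. \<forall>n\<ge>N. r_newton n (A n) (\<theta>s n) \<le>
         C * ((1 / q n) * (exp (3 * Q n) * (1 + 1 / (q n)^4) + exp (Q n)) * sqrt (ln (real n) / real n)))"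
  using assms
  by (intro exI[of _ "16 / sqrt \<gamma>"] allI impI; rule r_newton_eventually_le) (auto simp: geom_var_def)

end
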